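(* For any $f\in\mathcal{E}$ with $f\neq\mathrm{id}$, the index $[\mathcal{E}:C(f)]$ is uncountable, where $C(f)=\{g\in\mathcal{E}:fg=gf\}$.
   Context: Identify $\mathbb{T}^1=\mathbb{R}/\mathbb{Z}$ with $[0,1)$. An interval exchange transformation is a bijection of $\mathbb{T}^1$ that is a translation on each piece of some partition of $[0,1)$ into finitely many half-open intervals $[a,b)$; $\mathcal{E}$ is the group of these under composition. *)

theory Defs
  imports "HOL-Analysis.Analysis"
begin

text \<open>T^1 = R/Z identified with [0,1). An interval exchange transformation is
represented as a function real => real which is the identity outside [0,1),
is a bijection of [0,1), and is a translation on each piece of a partition
0 = a_0 < a_1 < ... < a_n = 1 of [0,1) into half-open intervals [a_i, a_{i+1}).\<close>

definition is_iet :: "(real \<Rightarrow> real) \<Rightarrow> bool" where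
  "is_iet f \<longleftrightarrow>
     bij_betw f {0..<1} {0..<1} \<and>
     (\<forall>x. x \<notin> {0..<1} \<longrightarrow> f x = x) \<and>
     (\<exists>(n::nat) (a::nat \<Rightarrow> real) (c::nat \<Rightarrow> real).
        n \<ge> 1 \<and> a 0 = 0 \<and> a n = 1 \<and> (\<forall>i<n. a i < a (Suc i)) \<and>
        (\<forall>i<n. \<forall>x\<in>{a i..<a (Suc i)}. f x = x + c i))"

definition IET :: "(real \<Rightarrow> real) set" where
  "IET = {f. is_iet f}"

definition centralizer :: "(real \<Rightarrow> real) \<Rightarrow> (real \<Rightarrow> real) set" where
  "centralizer f = {g \<in> IET. f \<circ> g = g \<circ> f}"

definition left_cosets_IET :: "(real \<Rightarrow> real) set \<Rightarrow> (real \<Rightarrow> real) set set" where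
  "left_cosets_IET H = {(\<lambda>h. g \<circ> h) ` H | g. g \<in> IET}"

end

theory Submission
  imports Defs
begin

text \<open>Pick p with f p \<noteq> p and an interval [u, u+L) starting at u = f p and avoiding p.
  The rotations r_t of [u, u+L) by t \<in> (0, L) fix p. If r_s and r_t lie in the same left
  coset of C(f), then h = r_t\<inverse> r_s commutes with f and fixes p, hence fixes f p = u;
  so u + s = r_s u = r_t u = u + t. Thus the cosets r_t C(f) are pairwise distinct,
  and there are as many of them as real numbers in (0, L).\<close>

definition interval_rotation :: "real \<Rightarrow> real \<Rightarrow> real \<Rightarrow> real \<Rightarrow> real" where
  "interval_rotation u L t x =
     (if u \<le> x \<and> x < u + L then (if x + t < u + L then x + t else x + t - L) else x)"

lemma interval_rotation_outside:
  "x \<notin> {u..<u + L} \<Longrightarrow> interval_rotation u L t x = x"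
  unfolding interval_rotation_def by auto

lemma interval_rotation_left_end:
  "0 \<le> t \<Longrightarrow> t < L \<Longrightarrow> interval_rotation u L t u = u + t"
  unfolding interval_rotation_def by auto

lemma interval_rotation_inverse:
  "0 < t \<Longrightarrow> t < L \<Longrightarrow> interval_rotation u L (L - t) (interval_rotation u L t x) = x"
  unfolding interval_rotation_def by auto

lemma inj_interval_rotation:
  assumes "0 < t" "t < L"
  shows "inj (interval_rotation u L t)"
  by (rule inj_on_inverseI[where g = "interval_rotation u L (L - t)"])
    (use interval_rotation_inverse[OF assms] in auto)

lemma interval_rotation_unit_interval:
  "0 \<le> u \<Longrightarrow> u + L \<le> 1 \<Longrightarrow> x \<in> {0..<1} \<Longrightarrow> 0 < t \<Longrightarrow> t < L \<Longrightarrow>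
   interval_rotation u L t x \<in> {0..<1}"
  unfolding interval_rotation_def by auto

lemma interval_rotation_piecewise_translation:
  assumes "0 < t" "t < L" "0 \<le> u" "u + L < 1"
  shows "\<exists>(n::nat) (a::nat \<Rightarrow> real) (c::nat \<Rightarrow> real).
           n \<ge> 1 \<and> a 0 = 0 \<and> a n = 1 \<and> (\<forall>i<n. a i < a (Suc i)) \<and>
           (\<forall>i<n. \<forall>x\<in>{a i..<a (Suc i)}. interval_rotation u L t x = x + c i)"
proof (cases "u = 0")
  case True
  let ?a = "\<lambda>i. [0, u + L - t, u + L, 1::real] ! i"
  let ?c = "\<lambda>i. [t, t - L, 0::real] ! i"
  have "\<forall>i<3. ?a i < ?a (Suc i)"
    using assms True by (auto simp: less_Suc_eq numeral_eq_Suc)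
  moreover have "\<forall>i<3. \<forall>x\<in>{?a i..<?a (Suc i)}. interval_rotation u L t x = x + ?c i"
    using assms True by (auto simp: less_Suc_eq numeral_eq_Suc interval_rotation_def)
  ultimately show ?thesis
    by (intro exI[of _ 3] exI[of _ ?a] exI[of _ ?c]) simp
next
  case False
  let ?a = "\<lambda>i. [0, u, u + L - t, u + L, 1::real] ! i"
  let ?c = "\<lambda>i. [0, t, t - L, 0::real] ! i"
  have "\<forall>i<4. ?a i < ?a (Suc i)"
    using assms False by (auto simp: less_Suc_eq numeral_eq_Suc)
  moreover have "\<forall>i<4. \<forall>x\<in>{?a i..<?a (Suc i)}. interval_rotation u L t x = x + ?c i"
    using assms False by (auto simp: less_Suc_eq numeral_eq_Suc interval_rotation_def)
  ultimately show ?thesis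
    by (intro exI[of _ 4] exI[of _ ?a] exI[of _ ?c]) simp
qed

lemma interval_rotation_in_IET:
  assumes "0 < t" "t < L" "0 \<le> u" "u + L < 1"
  shows "interval_rotation u L t \<in> IET"
proof -
  have "bij_betw (interval_rotation u L t) {0..<1} {0..<1}"
    by (rule bij_betw_byWitness[where f' = "interval_rotation u L (L - t)"])
      (use assms interval_rotation_inverse[of t L u] interval_rotation_inverse[of "L - t" L u]
         interval_rotation_unit_interval[of u L _ t]
         interval_rotation_unit_interval[of u L _ "L - t"] in auto)
  moreover have "\<forall>x. x \<notin> {0..<1} \<longrightarrow> interval_rotation u L t x = x"
    using assms unfolding interval_rotation_def by auto
  ultimately show ?thesis
    using interval_rotation_piecewise_translation[OF assms]
    unfolding IET_def is_iet_def by blast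
qed

lemma id_in_IET: "id \<in> IET"
proof -
  have "\<exists>(n::nat) (a::nat \<Rightarrow> real) (c::nat \<Rightarrow> real).
          n \<ge> 1 \<and> a 0 = 0 \<and> a n = 1 \<and> (\<forall>i<n. a i < a (Suc i)) \<and>
          (\<forall>i<n. \<forall>x\<in>{a i..<a (Suc i)}. id x = x + c i)"
    by (intro exI[of _ 1] exI[of _ "\<lambda>i. if i = 0 then 0 else 1"] exI[of _ "\<lambda>_. 0"]) auto
  then show ?thesis
    unfolding IET_def is_iet_def by auto
qed

lemma id_in_centralizer: "id \<in> centralizer f"
  using id_in_IET unfolding centralizer_def by simp

lemma same_coset_agree_at_image_of_fixed_point:
  assumes coset: "(\<lambda>h. g \<circ> h) ` centralizer f = (\<lambda>h. g' \<circ> h) ` centralizer f"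
    and "g p = p" "g' p = p" "inj g'"
  shows "g (f p) = g' (f p)"
proof -
  have "g \<in> (\<lambda>h. g' \<circ> h) ` centralizer f"
    using coset id_in_centralizer by (metis comp_id image_eqI)
  then obtain h where h: "h \<in> centralizer f" "g = g' \<circ> h"
    by auto
  have "g' (h p) = g' p"
    using h(2) assms(2,3) by (metis comp_apply)
  then have "h p = p"
    using \<open>inj g'\<close> by (simp add: inj_eq)
  moreover have "f (h p) = h (f p)"
    using h(1) unfolding centralizer_def by (simp add: fun_eq_iff)
  ultimately show ?thesis
    using h(2) by simp
qed

theorem corollary5p9:
  assumes "f \<in> IET" and "f \<noteq> id"
  shows "uncountable (left_cosets_IET (centralizer f))"
proof -
  obtain p where fp: "f p \<noteq> p"
    using assms(2) by (auto simp: fun_eq_iff)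
  have p: "p \<in> {0..<1}"
    using assms(1) fp unfolding IET_def is_iet_def by auto
  then have u: "f p \<in> {0..<1}"
    using assms(1) unfolding IET_def is_iet_def bij_betw_def by auto
  define u where "u = f p"
  define L where "L = (if u < p then p - u else 1 - u) / 2"
  have L: "0 < L" "u + L < 1" "p \<notin> {u..<u + L}"
    using p u fp unfolding L_def u_def by (auto simp: field_simps)
  define coset where "coset t = (\<lambda>h. interval_rotation u L t \<circ> h) ` centralizer f" for t
  have "coset ` {0<..<L} \<subseteq> left_cosets_IET (centralizer f)"
    using interval_rotation_in_IET L u unfolding coset_def left_cosets_IET_def u_def by fastforce
  moreover have "inj_on coset {0<..<L}"
  proof (rule inj_onI)
    fix s t assume "s \<in> {0<..<L}" "t \<in> {0<..<L}" "coset s = coset t"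
    then have "interval_rotation u L s u = interval_rotation u L t u"
      using same_coset_agree_at_image_of_fixed_point[of _ f _ p] inj_interval_rotation
        interval_rotation_outside[OF L(3)] unfolding coset_def u_def by auto
    with \<open>s \<in> {0<..<L}\<close> \<open>t \<in> {0<..<L}\<close> show "s = t"
      by (simp add: interval_rotation_left_end)
  qed
  ultimately show ?thesis
    using uncountable_open_interval[of 0 L] L(1)
    by (metis countable_image_inj_on countable_subset greaterThanLessThan_empty_iff)
qed

end
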